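(* With $Y_i$, $D_i$ and $T_{in}^{-1}$ as described in the context, for $1\le i<n$, $$[D_i,x_n^{-1}]=t^{2n-i-1}(t^{-1}-1)\,x_i^{-1}\,x_n^{-1}\,T_{in}^{-1}\,Y_i,$$ where $x_n^{-1}$ denotes the operator of multiplication by $x_n^{-1}$.
   Context: Let $n\ge2$, let $q,t$ be generic parameters, and let operators act on Laurent polynomials in $x=(x_1,\dots,x_n)$ with coefficients in $\mathbb{Q}(q,t)$. Let $s_i$ interchange $x_i,x_{i+1}$, and $(\tau_if)(x)=f(x_1,\dots,qx_i,\dots,x_n)$. Let $T_i=t+\frac{tx_i-x_{i+1}}{x_i-x_{i+1}}(s_i-1)$, $1\le i\le n-1$ (invertible, $T_i^{-1}=t^{-1}-1+t^{-1}T_i$). Let $\omega=s_{n-1}\cdots s_1\tau_1$ and $Y_i=t^{-n+i}T_i\cdots T_{n-1}\,\omega\,T_1^{-1}\cdots T_{i-1}^{-1}$. For $i<j$ let $T_{ij}^{-1}=T_i^{-1}\cdots T_{j-2}^{-1}T_{j-1}^{-1}T_{j-2}^{-1}\cdots T_i^{-1}$. The $q$-Dunkl operators are $D_i=x_i^{-1}\bigl(1-t^{n-1}[1+(t^{-1}-1)\sum_{j=i+1}^n t^{j-i}T_{ij}^{-1}]Y_i\bigr)$. *)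

theory Defs
  imports Main "HOL-Library.Poly_Mapping" "HOL-Computational_Algebra.Polynomial"
    "HOL-Computational_Algebra.Fraction_Field"
begin

text \<open>Coefficient field Q(q,t), realised as the fraction field of Q[t][q]
  (q outer variable, t inner variable); q and t are algebraically independent.\<close>
type_synonym K = "rat poly poly fract"

definition qp :: K where "qp = Fract [:0, 1:] 1"
definition tp :: K where "tp = Fract [:[:0, 1:]:] 1"

text \<open>Laurent polynomials: finitely supported maps from integer exponent
  vectors (finitely supported, indexed by nat) to coefficients.\<close>
type_synonym lpoly = "(nat \<Rightarrow>\<^sub>0 int) \<Rightarrow>\<^sub>0 K"
type_synonym lop = "lpoly \<Rightarrow> lpoly"

definition xpow :: "nat \<Rightarrow> int \<Rightarrow> lpoly" where
  "xpow i e = Poly_Mapping.single (Poly_Mapping.single i e) 1"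

definition scal :: "K \<Rightarrow> lpoly \<Rightarrow> lpoly" where
  "scal c f = Poly_Mapping.single 0 c * f"

definition swap_exp :: "nat \<Rightarrow> (nat \<Rightarrow>\<^sub>0 int) \<Rightarrow> (nat \<Rightarrow>\<^sub>0 int)" where
  "swap_exp i a = Abs_poly_mapping (\<lambda>j. Poly_Mapping.lookup a (if j = i then Suc i else if j = Suc i then i else j))"

definition s_op :: "nat \<Rightarrow> lop" where
  "s_op i f = Abs_poly_mapping (\<lambda>a. Poly_Mapping.lookup f (swap_exp i a))"

definition tau_op :: "nat \<Rightarrow> lop" where
  "tau_op i f = Abs_poly_mapping (\<lambda>a. qp powi (Poly_Mapping.lookup a i) * Poly_Mapping.lookup f a)"

definition ddiv :: "nat \<Rightarrow> lop" where
  "ddiv i g = (THE h. (xpow i 1 - xpow (Suc i) 1) * h = g)"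

definition T_op :: "nat \<Rightarrow> lop" where
  "T_op i f = scal tp f
     + (scal tp (xpow i 1) - xpow (Suc i) 1) * ddiv i (s_op i f - f)"

definition Tinv_op :: "nat \<Rightarrow> lop" where
  "Tinv_op i f = scal (inverse tp - 1) f + scal (inverse tp) (T_op i f)"

text \<open>operator product A_1 A_2 ... A_k (A_k applied first)\<close>
definition opprod :: "lop list \<Rightarrow> lop" where
  "opprod As = foldr (\<circ>) As id"

definition omega :: "nat \<Rightarrow> lop" where
  "omega n = opprod (map s_op (rev [1..<n]) @ [tau_op 1])"

definition Y_op :: "nat \<Rightarrow> nat \<Rightarrow> lop" where
  "Y_op n i f = scal (tp powi (int i - int n))
     (opprod (map T_op [i..<n] @ [omega n] @ map Tinv_op [1..<i]) f)"

definition Tinv_ij :: "nat \<Rightarrow> nat \<Rightarrow> lop" where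
  "Tinv_ij i j = opprod (map Tinv_op [i..<j - 1] @ [Tinv_op (j - 1)]
                        @ map Tinv_op (rev [i..<j - 1]))"

definition D_op :: "nat \<Rightarrow> nat \<Rightarrow> lop" where
  "D_op n i f = xpow i (-1) *
     (f - scal (tp ^ (n - 1))
            (Y_op n i f + scal (inverse tp - 1)
               (\<Sum>j = i + 1..n. scal (tp ^ (j - i)) (Tinv_ij i j (Y_op n i f)))))"

definition in_vars :: "nat \<Rightarrow> lpoly \<Rightarrow> bool" where
  "in_vars n f \<longleftrightarrow> (\<forall>a \<in> Poly_Mapping.keys f. Poly_Mapping.keys a \<subseteq> {1..n})"

end

theory Submission imports Defs begin

text \<open>
  The operators \<open>T\<^sub>k\<close> satisfy the quadratic relation \<open>T\<^sub>k\<^sup>2 = (t - 1) T\<^sub>k + t\<close> and the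
  intertwining relation \<open>T\<^sub>k x\<^sub>k\<^sub>+\<^sub>1\<^sup>-\<^sup>1 = t x\<^sub>k\<^sup>-\<^sup>1 T\<^sub>k\<^sup>-\<^sup>1\<close>; \<open>\<omega>\<close> turns \<open>x\<^sub>n\<^sup>-\<^sup>1\<close> into \<open>x\<^sub>n\<^sub>-\<^sub>1\<^sup>-\<^sup>1\<close>,
  and \<open>T\<^sub>k\<^sup>\<plusminus>\<^sup>1\<close> commutes with \<open>x\<^sub>n\<^sup>-\<^sup>1\<close> when \<open>k + 1 < n\<close>. Hence \<open>Y\<^sub>i x\<^sub>n\<^sup>-\<^sup>1 - x\<^sub>n\<^sup>-\<^sup>1 Y\<^sub>i\<close> is
  \<open>(1 - t\<^sup>-\<^sup>1) t\<^sup>i\<^sup>-\<^sup>n T\<^sub>i \<cdots> T\<^sub>n\<^sub>-\<^sub>1 x\<^sub>n\<^sup>-\<^sup>1 T\<^sub>n\<^sub>-\<^sub>1 \<omega> T\<^sub>1\<^sup>-\<^sup>1 \<cdots> T\<^sub>i\<^sub>-\<^sub>1\<^sup>-\<^sup>1\<close>. The Hecke identity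
  \<open>(1 + (t\<^sup>-\<^sup>1 - 1) \<Sum>\<^sub>j\<^sub>>\<^sub>i t\<^sup>j\<^sup>-\<^sup>i T\<^sub>i\<^sub>j\<^sup>-\<^sup>1) T\<^sub>i \<cdots> T\<^sub>n\<^sub>-\<^sub>1 = t\<^sup>n\<^sup>-\<^sup>i T\<^sub>i\<^sub>n\<^sup>-\<^sup>1 T\<^sub>i \<cdots> T\<^sub>n\<^sub>-\<^sub>2\<close>, proved by
  induction on \<open>n - i\<close> from the quadratic relation, turns this correction into a multiple of
  \<open>T\<^sub>i\<^sub>n\<^sup>-\<^sup>1 x\<^sub>n\<^sup>-\<^sup>1 Y\<^sub>i\<close>. On the other side \<open>T\<^sub>i\<^sub>j\<^sup>-\<^sup>1\<close> commutes with \<open>x\<^sub>n\<^sup>-\<^sup>1\<close> for \<open>j < n\<close>, so the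
  summand \<open>j = n\<close> of the Dunkl operator is the only other source of non-commutativity; the
  two \<open>T\<^sub>i\<^sub>n\<^sup>-\<^sup>1 x\<^sub>n\<^sup>-\<^sup>1 Y\<^sub>i\<close> terms cancel and \<open>x\<^sub>n\<^sup>-\<^sup>1 T\<^sub>i\<^sub>n\<^sup>-\<^sup>1 Y\<^sub>i\<close> remains.
\<close>

abbreviation cst :: "K \<Rightarrow> lpoly" where "cst c \<equiv> Poly_Mapping.single 0 c"

lemma tp_nonzero: "tp \<noteq> 0"
  unfolding tp_def by (simp add: eq_fract Zero_fract_def)

lemma cst_mult: "cst a * cst b = cst (a * b)"
  by (simp add: mult_single)

lemma cst_diff: "cst (a - b) = cst a - cst b"
  by (simp add: single_diff)

lemma cst_tp_nonzero: "cst tp \<noteq> 0"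
  using tp_nonzero by (metis lookup_single_eq lookup_zero)

lemma cst_tp_inverse: "cst tp * cst (inverse tp) = 1"
  by (simp add: cst_mult tp_nonzero)

lemma cst_inverse_tp_minus_one: "cst (inverse tp - 1) * cst tp = 1 - cst tp"
  by (simp add: cst_mult tp_nonzero left_diff_distrib cst_diff)

lemma xpow_add: "xpow i (a + b) = xpow i a * xpow i b"
  by (simp add: xpow_def mult_single single_add)

lemma xpow_zero: "xpow i 0 = 1"
  by (simp add: xpow_def)

lemma xpow_one_mult_xpow_minus_one: "xpow i 1 * xpow i (-1) = 1"
  by (simp add: xpow_add[symmetric] xpow_zero)

lemma xpow_of_nat: "xpow i (int m) = xpow i 1 ^ m"
proof (induction m)
  case (Suc m)
  have "xpow i (int (Suc m)) = xpow i 1 * xpow i (int m)"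
    by (simp add: xpow_add[symmetric] add.commute)
  then show ?case using Suc by simp
qed (simp add: xpow_zero)

lemma lookup_single_mult:
  fixes f :: "('a::ab_group_add) \<Rightarrow>\<^sub>0 ('b::comm_semiring_1)"
  shows "Poly_Mapping.lookup (Poly_Mapping.single a c * f) b = c * Poly_Mapping.lookup f (b - a)"
proof -
  have "\<And>d. (b = a + d) = (d = b - a)" by (auto simp: algebra_simps)
  then show ?thesis by (simp add: lookup_mult lookup_single when_mult mult_when)
qed

lemma poly_mapping_single_add_induct [case_names zero single_add]:
  assumes "P 0" and "\<And>f a b. P f \<Longrightarrow> P (Poly_Mapping.single a b + f)"
  shows "P f"
proof (induction f rule: update_induct)
  case (update f a b)
  have "Poly_Mapping.update a b f = Poly_Mapping.single a b + f"
    using \<open>a \<notin> Poly_Mapping.keys f\<close>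
    by (intro poly_mapping_eqI) (auto simp: lookup_update lookup_add lookup_single in_keys_iff)
  with update.IH assms(2) show ?case by simp
qed (use assms(1) in simp)

definition swap_index :: "nat \<Rightarrow> nat \<Rightarrow> nat" where
  "swap_index k j = (if j = k then Suc k else if j = Suc k then k else j)"

lemma swap_index_swap_index [simp]: "swap_index k (swap_index k j) = j"
  by (auto simp: swap_index_def)

lemma lookup_swap_exp: "Poly_Mapping.lookup (swap_exp k a) j = Poly_Mapping.lookup a (swap_index k j)"
proof -
  have "{j. Poly_Mapping.lookup a (swap_index k j) \<noteq> 0} \<subseteq> swap_index k ` Poly_Mapping.keys a"
    by (auto simp: in_keys_iff intro!: image_eqI[where x="swap_index k _"])
  then have "finite {j. Poly_Mapping.lookup a (swap_index k j) \<noteq> 0}"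
    by (rule finite_subset) simp
  then show ?thesis unfolding swap_exp_def swap_index_def by simp
qed

lemma swap_exp_swap_exp [simp]: "swap_exp k (swap_exp k a) = a"
  by (rule poly_mapping_eqI) (simp add: lookup_swap_exp)

lemma swap_exp_zero [simp]: "swap_exp k 0 = 0"
  by (rule poly_mapping_eqI) (simp add: lookup_swap_exp)

lemma swap_exp_add: "swap_exp k (a + b) = swap_exp k a + swap_exp k b"
  by (rule poly_mapping_eqI) (simp add: lookup_swap_exp lookup_add)

lemma swap_exp_diff: "swap_exp k (a - b) = swap_exp k a - swap_exp k b"
  by (rule poly_mapping_eqI) (simp add: lookup_swap_exp lookup_minus)

lemma swap_exp_single: "swap_exp k (Poly_Mapping.single j m) = Poly_Mapping.single (swap_index k j) m"
  by (rule poly_mapping_eqI) (auto simp: lookup_swap_exp lookup_single when_def swap_index_def)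

lemma lookup_s_op: "Poly_Mapping.lookup (s_op k f) a = Poly_Mapping.lookup f (swap_exp k a)"
proof -
  have "{a. Poly_Mapping.lookup f (swap_exp k a) \<noteq> 0} \<subseteq> swap_exp k ` Poly_Mapping.keys f"
    by (auto simp: in_keys_iff intro!: image_eqI[where x="swap_exp k _"])
  then have "finite {a. Poly_Mapping.lookup f (swap_exp k a) \<noteq> 0}"
    by (rule finite_subset) simp
  then show ?thesis unfolding s_op_def by simp
qed

lemma s_op_add: "s_op k (f + g) = s_op k f + s_op k g"
  by (rule poly_mapping_eqI) (simp add: lookup_s_op lookup_add)

lemma s_op_diff: "s_op k (f - g) = s_op k f - s_op k g"
  by (rule poly_mapping_eqI) (simp add: lookup_s_op lookup_minus)

lemma s_op_zero: "s_op k 0 = 0"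
  by (rule poly_mapping_eqI) (simp add: lookup_s_op)

lemma s_op_s_op: "s_op k (s_op k f) = f"
  by (rule poly_mapping_eqI) (simp add: lookup_s_op)

lemma s_op_single: "s_op k (Poly_Mapping.single a c) = Poly_Mapping.single (swap_exp k a) c"
  by (rule poly_mapping_eqI) (auto simp: lookup_s_op lookup_single when_def)

lemma s_op_single_mult:
  "s_op k (Poly_Mapping.single a c * g) = Poly_Mapping.single (swap_exp k a) c * s_op k g"
proof (rule poly_mapping_eqI)
  fix b
  have "swap_exp k (b - swap_exp k a) = swap_exp k b - a"
    by (simp add: swap_exp_diff)
  then show "Poly_Mapping.lookup (s_op k (Poly_Mapping.single a c * g)) b
      = Poly_Mapping.lookup (Poly_Mapping.single (swap_exp k a) c * s_op k g) b"
    by (simp add: lookup_s_op lookup_single_mult)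
qed

lemma s_op_mult: "s_op k (f * g) = s_op k f * s_op k g"
  by (induction f rule: poly_mapping_single_add_induct)
     (simp_all add: s_op_zero distrib_right s_op_add s_op_single_mult s_op_single)

lemma s_op_cst: "s_op k (cst c) = cst c"
  by (simp add: s_op_single)

lemma s_op_xpow: "s_op k (xpow j m) = xpow (swap_index k j) m"
  by (simp add: xpow_def s_op_single swap_exp_single)

section \<open>Exact division by \<open>x\<^sub>k - x\<^sub>k\<^sub>+\<^sub>1\<close>\<close>

definition xdiff :: "nat \<Rightarrow> lpoly" where
  "xdiff k = xpow k 1 - xpow (Suc k) 1"

lemma xdiff_nonzero: "xdiff k \<noteq> 0"
proof
  assume "xdiff k = 0"
  then have "Poly_Mapping.lookup (xdiff k) (Poly_Mapping.single k 1) = 0" by simp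
  moreover have "Poly_Mapping.single k (1::int) \<noteq> Poly_Mapping.single (Suc k) 1"
    by (metis lookup_single_eq lookup_single_not_eq n_not_Suc_n zero_neq_one)
  ultimately show False
    by (simp add: xdiff_def xpow_def lookup_minus lookup_single when_def)
qed

lemma xdiff_dvd_monomial_swap_diff:
  "xdiff k dvd (xpow k r * xpow (Suc k) p - xpow k p * xpow (Suc k) r)"
proof -
  have ordered: "xdiff k dvd (xpow k r * xpow (Suc k) p - xpow k p * xpow (Suc k) r)"
    if "r \<le> p" for r p
  proof -
    define m where "m = nat (p - r)"
    have "p = r + int m" using that m_def by simp
    then have split: "xpow j p = xpow j r * xpow j 1 ^ m" for j
      by (simp add: xpow_add xpow_of_nat)
    have "xpow k r * xpow (Suc k) p - xpow k p * xpow (Suc k) r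
        = - (xpow k r * xpow (Suc k) r * (xpow k 1 ^ m - xpow (Suc k) 1 ^ m))"
      unfolding split by algebra
    moreover have "xdiff k dvd xpow k 1 ^ m - xpow (Suc k) 1 ^ m"
      unfolding xdiff_def power_diff_sumr2 by simp
    ultimately show ?thesis by simp
  qed
  show ?thesis
  proof (cases "r \<le> p")
    case False
    then have "xdiff k dvd (xpow k p * xpow (Suc k) r - xpow k r * xpow (Suc k) p)"
      by (intro ordered) simp
    then show ?thesis by (metis dvd_minus_iff minus_diff_eq)
  qed (rule ordered)
qed

lemma xdiff_dvd_s_op_single_diff:
  "xdiff k dvd (s_op k (Poly_Mapping.single a c) - Poly_Mapping.single a c)"
proof -
  define p where "p = Poly_Mapping.lookup a k"
  define r where "r = Poly_Mapping.lookup a (Suc k)"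
  define a' where "a' = a - Poly_Mapping.single k p - Poly_Mapping.single (Suc k) r"
  have a: "a = a' + Poly_Mapping.single k p + Poly_Mapping.single (Suc k) r"
    by (simp add: a'_def)
  have "swap_exp k a' = a'"
    by (rule poly_mapping_eqI)
       (auto simp: lookup_swap_exp a'_def lookup_minus lookup_single when_def swap_index_def p_def r_def)
  then have swap_a: "swap_exp k a = a' + Poly_Mapping.single k r + Poly_Mapping.single (Suc k) p"
    unfolding a by (simp add: swap_exp_add swap_exp_single swap_index_def)
  have monomial: "Poly_Mapping.single (a' + Poly_Mapping.single k u + Poly_Mapping.single (Suc k) v) c
      = cst c * Poly_Mapping.single a' 1 * (xpow k u * xpow (Suc k) v)" for u v :: int
    by (simp add: xpow_def mult_single add.assoc)
  have "s_op k (Poly_Mapping.single a c) - Poly_Mapping.single a c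
      = cst c * Poly_Mapping.single a' 1 * (xpow k r * xpow (Suc k) p - xpow k p * xpow (Suc k) r)"
    by (subst (2) a) (simp only: s_op_single swap_a monomial right_diff_distrib)
  then show ?thesis using xdiff_dvd_monomial_swap_diff by (metis dvd_mult)
qed

lemma xdiff_dvd_s_op_diff: "xdiff k dvd (s_op k f - f)"
proof (induction f rule: poly_mapping_single_add_induct)
  case (single_add f a b)
  have "s_op k (Poly_Mapping.single a b + f) - (Poly_Mapping.single a b + f)
      = (s_op k (Poly_Mapping.single a b) - Poly_Mapping.single a b) + (s_op k f - f)"
    by (simp add: s_op_add)
  then show ?case using single_add xdiff_dvd_s_op_single_diff by (metis dvd_add)
qed (simp add: s_op_zero)

lemma xdiff_mult_ddiv: "xdiff k * ddiv k (s_op k f - f) = s_op k f - f"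
proof -
  obtain h where "s_op k f - f = xdiff k * h"
    using xdiff_dvd_s_op_diff by (rule dvdE)
  then have "\<exists>!h. xdiff k * h = s_op k f - f"
    using xdiff_nonzero by auto
  then show ?thesis unfolding ddiv_def xdiff_def by (rule theI')
qed

section \<open>The Demazure--Lusztig operators \<open>T\<^sub>k\<close>\<close>

lemma xdiff_mult_T_op:
  "xdiff k * T_op k f = cst tp * xdiff k * f + (cst tp * xpow k 1 - xpow (Suc k) 1) * (s_op k f - f)"
proof -
  have "xdiff k * T_op k f = cst tp * xdiff k * f
      + (cst tp * xpow k 1 - xpow (Suc k) 1) * (xdiff k * ddiv k (s_op k f - f))"
    unfolding T_op_def scal_def xdiff_def by (simp add: algebra_simps)
  then show ?thesis by (simp add: xdiff_mult_ddiv)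
qed

lemma s_op_xdiff: "s_op k (xdiff k) = - xdiff k"
  by (simp add: xdiff_def s_op_diff s_op_xpow swap_index_def)

lemma T_op_mult_symmetric:
  assumes "s_op k g = g"
  shows "T_op k (g * f) = g * T_op k f"
proof -
  have "xdiff k * T_op k (g * f) = xdiff k * (g * T_op k f)"
    unfolding mult.left_commute[of "xdiff k" g] xdiff_mult_T_op
    by (simp add: s_op_mult assms algebra_simps)
  then show ?thesis using xdiff_nonzero by simp
qed

lemma T_op_cst: "T_op k (cst c * f) = cst c * T_op k f"
  by (rule T_op_mult_symmetric) (simp add: s_op_cst)

lemma T_op_add: "T_op k (f + g) = T_op k f + T_op k g"
proof -
  have "xdiff k * T_op k (f + g) = xdiff k * (T_op k f + T_op k g)"
    by (simp add: distrib_left xdiff_mult_T_op s_op_add algebra_simps)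
  then show ?thesis using xdiff_nonzero by simp
qed

lemma T_op_quadratic: "T_op k (T_op k f) = (cst tp - 1) * T_op k f + cst tp * f"
proof -
  let ?u = "xpow k 1" and ?v = "xpow (Suc k) 1" and ?t = "cst tp"
  have T1: "xdiff k * T_op k f = ?t * xdiff k * f + (?t * ?u - ?v) * (s_op k f - f)"
    by (rule xdiff_mult_T_op)
  have T2: "xdiff k * T_op k (T_op k f)
      = ?t * xdiff k * T_op k f + (?t * ?u - ?v) * (s_op k (T_op k f) - T_op k f)"
    by (rule xdiff_mult_T_op)
  have "s_op k (xdiff k * T_op k f) = s_op k (?t * xdiff k * f + (?t * ?u - ?v) * (s_op k f - f))"
    using T1 by simp
  then have "- xdiff k * s_op k (T_op k f) = ?t * (- xdiff k) * s_op k f + (?t * ?v - ?u) * (f - s_op k f)"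
    by (simp add: s_op_mult s_op_add s_op_diff s_op_cst s_op_xpow s_op_xdiff s_op_s_op swap_index_def)
  then have sT: "xdiff k * s_op k (T_op k f) = ?t * xdiff k * s_op k f - (?t * ?v - ?u) * (f - s_op k f)"
    by (simp add: algebra_simps)
  have "xdiff k * (xdiff k * T_op k (T_op k f)) = xdiff k * (xdiff k * ((?t - 1) * T_op k f + ?t * f))"
    using T1 T2 sT unfolding xdiff_def by algebra
  then show ?thesis using xdiff_nonzero by simp
qed

lemma tp_mult_Tinv_op: "cst tp * Tinv_op k f = T_op k f + (1 - cst tp) * f"
proof -
  have "cst tp * Tinv_op k f
      = (cst (inverse tp - 1) * cst tp) * f + (cst tp * cst (inverse tp)) * T_op k f"
    unfolding Tinv_op_def scal_def by (simp add: algebra_simps)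
  then show ?thesis by (simp add: cst_inverse_tp_minus_one cst_tp_inverse)
qed

lemma Tinv_op_T_op: "Tinv_op k (T_op k f) = f"
proof -
  have "cst tp * Tinv_op k (T_op k f) = cst tp * f"
    by (simp add: tp_mult_Tinv_op T_op_quadratic algebra_simps)
  then show ?thesis using cst_tp_nonzero by simp
qed

lemma Tinv_op_add: "Tinv_op k (f + g) = Tinv_op k f + Tinv_op k g"
  unfolding Tinv_op_def scal_def by (simp add: T_op_add algebra_simps)

lemma Tinv_op_mult_symmetric:
  assumes "s_op k g = g"
  shows "Tinv_op k (g * f) = g * Tinv_op k f"
  unfolding Tinv_op_def scal_def T_op_mult_symmetric[OF assms] by (simp add: algebra_simps)

text \<open>In operator form \<open>T\<^sub>k x\<^sub>k\<^sub>+\<^sub>1\<^sup>-\<^sup>1 = t x\<^sub>k\<^sup>-\<^sup>1 T\<^sub>k\<^sup>-\<^sup>1\<close>.\<close>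

lemma T_op_mult_xinv_Suc:
  "T_op k (xpow (Suc k) (-1) * g) = xpow k (-1) * (T_op k g + (1 - cst tp) * g)"
proof -
  let ?u = "xpow k 1" and ?v = "xpow (Suc k) 1" and ?t = "cst tp"
    and ?u' = "xpow k (-1)" and ?v' = "xpow (Suc k) (-1)"
  have inv: "?u * ?u' = 1" "?v * ?v' = 1"
    by (simp_all add: xpow_one_mult_xpow_minus_one)
  have T1: "xdiff k * T_op k g = ?t * xdiff k * g + (?t * ?u - ?v) * (s_op k g - g)"
    by (rule xdiff_mult_T_op)
  have T2: "xdiff k * T_op k (?v' * g)
      = ?t * xdiff k * (?v' * g) + (?t * ?u - ?v) * (?u' * s_op k g - ?v' * g)"
    by (simp add: xdiff_mult_T_op s_op_mult s_op_xpow swap_index_def)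
  have "xdiff k * T_op k (?v' * g) = xdiff k * (?u' * (T_op k g + (1 - ?t) * g))"
    using inv T1 T2 unfolding xdiff_def by algebra
  then show ?thesis using xdiff_nonzero by simp
qed

lemma T_op_mult_xinv:
  "T_op k (xpow k (-1) * h) = xpow (Suc k) (-1) * T_op k h
     + cst (1 - inverse tp) * T_op k (xpow (Suc k) (-1) * T_op k h)"
proof -
  let ?w = "xpow (Suc k) (-1) * T_op k h"
  have "T_op k ?w = cst tp * (xpow k (-1) * h)"
    by (simp only: T_op_mult_xinv_Suc T_op_quadratic) (simp add: algebra_simps)
  then have "cst tp * T_op k (xpow k (-1) * h) = T_op k (T_op k ?w)"
    by (simp add: T_op_cst)
  also have "\<dots> = cst tp * (?w + cst (1 - inverse tp) * T_op k ?w)"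
    using cst_tp_inverse by (simp add: T_op_quadratic cst_diff algebra_simps)
  finally show ?thesis using cst_tp_nonzero by simp
qed

definition op_linear :: "lop \<Rightarrow> bool" where
  "op_linear F \<longleftrightarrow> (\<forall>f g. F (f + g) = F f + F g) \<and> (\<forall>c f. F (cst c * f) = cst c * F f)"

definition op_commutes :: "lpoly \<Rightarrow> lop \<Rightarrow> bool" where
  "op_commutes g F \<longleftrightarrow> (\<forall>f. F (g * f) = g * F f)"

lemma op_linear_add: "op_linear F \<Longrightarrow> F (f + g) = F f + F g"
  and op_linear_cst: "op_linear F \<Longrightarrow> F (cst c * f) = cst c * F f"
  by (auto simp: op_linear_def)

lemma op_linear_diff: "op_linear F \<Longrightarrow> F (f - g) = F f - F g"
  using op_linear_add[of F "f - g" g] by simp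

lemma op_linear_zero: "op_linear F \<Longrightarrow> F 0 = 0"
  using op_linear_diff[of F 0 0] by simp

lemma op_linear_sum: "op_linear F \<Longrightarrow> F (\<Sum>j\<in>A. h j) = (\<Sum>j\<in>A. F (h j))"
  by (induction A rule: infinite_finite_induct) (auto simp: op_linear_add op_linear_zero)

lemma opprod_Nil: "opprod [] = id"
  by (simp add: opprod_def)

lemma opprod_Cons: "opprod (F # Fs) = F \<circ> opprod Fs"
  by (simp add: opprod_def)

lemma opprod_append: "opprod (Fs @ Gs) = opprod Fs \<circ> opprod Gs"
  by (induction Fs) (simp_all add: opprod_Nil opprod_Cons)

lemma op_linear_opprod: "(\<And>F. F \<in> set Fs \<Longrightarrow> op_linear F) \<Longrightarrow> op_linear (opprod Fs)"
  by (induction Fs) (auto simp: opprod_Nil opprod_Cons op_linear_def)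

lemma op_commutes_opprod: "(\<And>F. F \<in> set Fs \<Longrightarrow> op_commutes g F) \<Longrightarrow> op_commutes g (opprod Fs)"
  by (induction Fs) (auto simp: opprod_Nil opprod_Cons op_commutes_def)

lemma op_linear_T_op: "op_linear (T_op k)"
  by (simp add: op_linear_def T_op_add T_op_cst)

lemma op_linear_Tinv_op: "op_linear (Tinv_op k)"
  by (simp add: op_linear_def Tinv_op_add Tinv_op_mult_symmetric s_op_cst)

lemma s_op_xpow_other: "k \<noteq> m \<Longrightarrow> Suc k \<noteq> m \<Longrightarrow> s_op k (xpow m e) = xpow m e"
  by (simp add: s_op_xpow swap_index_def)

lemma op_commutes_xpow_s_op: "k \<noteq> m \<Longrightarrow> Suc k \<noteq> m \<Longrightarrow> op_commutes (xpow m e) (s_op k)"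
  by (simp add: op_commutes_def s_op_mult s_op_xpow_other)

lemma op_commutes_xpow_T_op: "k \<noteq> m \<Longrightarrow> Suc k \<noteq> m \<Longrightarrow> op_commutes (xpow m e) (T_op k)"
  by (simp add: op_commutes_def T_op_mult_symmetric s_op_xpow_other)

lemma op_commutes_xpow_Tinv_op: "k \<noteq> m \<Longrightarrow> Suc k \<noteq> m \<Longrightarrow> op_commutes (xpow m e) (Tinv_op k)"
  by (simp add: op_commutes_def Tinv_op_mult_symmetric s_op_xpow_other)

lemma op_linear_Tinv_ij: "op_linear (Tinv_ij i j)"
  unfolding Tinv_ij_def by (rule op_linear_opprod) (auto simp: op_linear_Tinv_op)

lemma op_commutes_xpow_Tinv_ij: "0 < j \<Longrightarrow> j < m \<Longrightarrow> op_commutes (xpow m e) (Tinv_ij i j)"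
  unfolding Tinv_ij_def by (rule op_commutes_opprod) (auto intro!: op_commutes_xpow_Tinv_op)

lemma Tinv_ij_Suc: "Tinv_ij i (Suc i) = Tinv_op i"
  by (simp add: Tinv_ij_def opprod_Nil opprod_Cons)

lemma Tinv_ij_step: "Suc i < j \<Longrightarrow> Tinv_ij i j f = Tinv_op i (Tinv_ij (Suc i) j (Tinv_op i f))"
  by (simp add: Tinv_ij_def upt_conv_Cons opprod_append opprod_Cons opprod_Nil)

lemma lookup_tau_op: "Poly_Mapping.lookup (tau_op i f) a = qp powi (Poly_Mapping.lookup a i) * Poly_Mapping.lookup f a"
proof -
  have "{a. qp powi (Poly_Mapping.lookup a i) * Poly_Mapping.lookup f a \<noteq> 0} \<subseteq> Poly_Mapping.keys f"
    by (auto simp: in_keys_iff)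
  then have "finite {a. qp powi (Poly_Mapping.lookup a i) * Poly_Mapping.lookup f a \<noteq> 0}"
    by (rule finite_subset) simp
  then show ?thesis unfolding tau_op_def by simp
qed

lemma tau_op_mult_xpow_other:
  assumes "m \<noteq> i"
  shows "tau_op i (xpow m e * g) = xpow m e * tau_op i g"
proof (rule poly_mapping_eqI)
  fix a
  have "Poly_Mapping.lookup (a - Poly_Mapping.single m e) i = Poly_Mapping.lookup a i"
    using assms by (simp add: lookup_minus lookup_single)
  then show "Poly_Mapping.lookup (tau_op i (xpow m e * g)) a = Poly_Mapping.lookup (xpow m e * tau_op i g) a"
    by (simp add: xpow_def lookup_tau_op lookup_single_mult)
qed

lemma omega_mult_xpow:
  assumes "2 \<le> n"
  shows "omega n (xpow n e * g) = xpow (n - 1) e * omega n g"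
proof -
  let ?S = "opprod (map s_op (rev [1..<n - 1]))"
  have omega: "omega n = s_op (n - 1) \<circ> ?S \<circ> tau_op 1"
  proof -
    have "rev [1..<n] = (n - 1) # rev [1..<n - 1]"
      using assms by (cases n) (simp_all add: upt_Suc_append)
    then show ?thesis
      unfolding omega_def by (simp add: opprod_append opprod_Cons opprod_Nil comp_assoc)
  qed
  have "op_commutes (xpow n e) ?S"
    by (rule op_commutes_opprod) (auto intro!: op_commutes_xpow_s_op)
  then have "omega n (xpow n e * g) = s_op (n - 1) (xpow n e * ?S (tau_op 1 g))"
    using assms by (simp add: omega tau_op_mult_xpow_other op_commutes_def)
  also have "\<dots> = xpow (n - 1) e * omega n g"
  proof -
    have "s_op (n - 1) (xpow n e) = xpow (n - 1) e"
      using assms by (auto simp: s_op_xpow swap_index_def)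
    then show ?thesis by (simp add: omega s_op_mult)
  qed
  finally show ?thesis .
qed

section \<open>The Hecke identity\<close>

definition hecke_sum :: "nat \<Rightarrow> nat \<Rightarrow> lop" where
  "hecke_sum n i G = G + scal (inverse tp - 1) (\<Sum>j = i + 1..n. scal (tp ^ (j - i)) (Tinv_ij i j G))"

definition T_chain :: "nat \<Rightarrow> nat \<Rightarrow> lop" where
  "T_chain i m = opprod (map T_op [i..<m])"

lemma T_chain_self: "T_chain m m = id"
  by (simp add: T_chain_def opprod_Nil)

lemma T_chain_step: "i < m \<Longrightarrow> T_chain i m f = T_op i (T_chain (Suc i) m f)"
  by (simp add: T_chain_def upt_conv_Cons opprod_Cons)

lemma T_chain_mult_xpow:
  assumes "m < n"
  shows "T_chain i m (xpow n e * f) = xpow n e * T_chain i m f"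
proof -
  have "op_commutes (xpow n e) (T_chain i m)"
    unfolding T_chain_def
    by (rule op_commutes_opprod) (use assms in \<open>auto intro!: op_commutes_xpow_T_op\<close>)
  then show ?thesis by (simp add: op_commutes_def)
qed

lemma op_linear_T_chain: "op_linear (T_chain i m)"
  unfolding T_chain_def by (rule op_linear_opprod) (auto simp: op_linear_T_op)

lemma op_linear_hecke_sum: "op_linear (hecke_sum n i)"
  unfolding op_linear_def hecke_sum_def scal_def
  by (simp add: op_linear_add[OF op_linear_Tinv_ij] op_linear_cst[OF op_linear_Tinv_ij]
      distrib_left sum.distrib sum_distrib_left mult.left_commute)

lemma hecke_sum_step:
  assumes "Suc i < n"
  shows "hecke_sum n i G = G + cst (inverse tp - 1) * (cst tp * Tinv_op i G)
           + cst tp * Tinv_op i (hecke_sum n (Suc i) (Tinv_op i G) - Tinv_op i G)"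
proof -
  let ?S = "\<Sum>j = Suc i + 1..n. cst (tp ^ (j - Suc i)) * Tinv_ij (Suc i) j (Tinv_op i G)"
  have range: "{i + 1..n} = insert (Suc i) {Suc i + 1..n}" using assms by auto
  have summand: "cst (tp ^ (j - i)) * Tinv_ij i j G
      = cst tp * Tinv_op i (cst (tp ^ (j - Suc i)) * Tinv_ij (Suc i) j (Tinv_op i G))"
    if "j \<in> {Suc i + 1..n}" for j
  proof -
    have "tp ^ (j - i) = tp * tp ^ (j - Suc i)" using that
      by (simp add: power_Suc[symmetric] Suc_diff_Suc)
    then show ?thesis using that
      by (simp add: Tinv_ij_step op_linear_cst[OF op_linear_Tinv_op] cst_mult[symmetric] mult.assoc)
  qed
  have "(\<Sum>j = i + 1..n. cst (tp ^ (j - i)) * Tinv_ij i j G) = cst tp * Tinv_op i G + cst tp * Tinv_op i ?S"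
    unfolding range using summand
    by (simp add: Tinv_ij_Suc op_linear_sum[OF op_linear_Tinv_op] sum_distrib_left)
  moreover have "hecke_sum n (Suc i) (Tinv_op i G) - Tinv_op i G = cst (inverse tp - 1) * ?S"
    by (simp add: hecke_sum_def scal_def sum_distrib_left)
  ultimately show ?thesis
    unfolding hecke_sum_def scal_def
    by (simp add: op_linear_cst[OF op_linear_Tinv_op] distrib_left mult.left_commute)
qed

lemma hecke_sum_T_chain:
  assumes "i < n"
  shows "hecke_sum n i (T_chain i (n - 1) (T_op (n - 1) u))
       = cst (tp ^ (n - i)) * Tinv_ij i n (T_chain i (n - 1) u)"
  using assms
proof (induction "n - 1 - i" arbitrary: i u)
  case 0
  then have n: "n = Suc i" by simp
  have "hecke_sum n i (T_op i u) = T_op i u + (cst (inverse tp - 1) * cst tp) * u"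
    by (simp add: n hecke_sum_def scal_def Tinv_ij_Suc Tinv_op_T_op mult.assoc)
  then show ?case
    by (simp add: n T_chain_self Tinv_ij_Suc tp_mult_Tinv_op cst_inverse_tp_minus_one)
next
  case (Suc d)
  then have i: "Suc i < n" by simp
  let ?w = "T_chain (Suc i) (n - 1) (T_op (n - 1) u)"
  have chain: "T_chain i (n - 1) v = T_op i (T_chain (Suc i) (n - 1) v)" for v
    using i by (intro T_chain_step) simp
  have "hecke_sum n i (T_op i ?w)
      = T_op i ?w + (cst (inverse tp - 1) * cst tp) * ?w
        + cst tp * Tinv_op i (hecke_sum n (Suc i) ?w) - cst tp * Tinv_op i ?w"
    by (simp add: hecke_sum_step[OF i] Tinv_op_T_op op_linear_diff[OF op_linear_Tinv_op]
        algebra_simps)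
  also have "\<dots> = cst tp * Tinv_op i (hecke_sum n (Suc i) ?w)"
    by (simp add: cst_inverse_tp_minus_one tp_mult_Tinv_op)
  also have "\<dots> = cst (tp * tp ^ (n - Suc i))
      * Tinv_op i (Tinv_ij (Suc i) n (T_chain (Suc i) (n - 1) u))"
    using Suc.hyps(1)[of "Suc i"] Suc.hyps(2) i
    by (simp add: op_linear_cst[OF op_linear_Tinv_op] cst_mult[symmetric] mult.assoc)
  also have "\<dots> = cst (tp ^ (n - i)) * Tinv_ij i n (T_chain i (n - 1) u)"
    unfolding chain using i
    by (simp add: Tinv_ij_step Tinv_op_T_op power_Suc[symmetric] Suc_diff_Suc)
  finally show ?case unfolding chain .
qed

section \<open>Commutation with \<open>x\<^sub>n\<^sup>-\<^sup>1\<close>\<close>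

definition Tinv_chain :: "nat \<Rightarrow> lop" where
  "Tinv_chain i = opprod (map Tinv_op [1..<i])"

lemma Tinv_chain_mult_xpow:
  assumes "i < n"
  shows "Tinv_chain i (xpow n e * f) = xpow n e * Tinv_chain i f"
proof -
  have "op_commutes (xpow n e) (Tinv_chain i)"
    unfolding Tinv_chain_def
    by (rule op_commutes_opprod) (use assms in \<open>auto intro!: op_commutes_xpow_Tinv_op\<close>)
  then show ?thesis by (simp add: op_commutes_def)
qed

lemma Y_op_split:
  assumes "i < n"
  shows "Y_op n i f = cst (tp powi (int i - int n))
           * T_chain i (n - 1) (T_op (n - 1) (omega n (Tinv_chain i f)))"
proof -
  have "[i..<n] = [i..<n - 1] @ [n - 1]"
    using assms by (cases n) (simp_all add: upt_Suc_append)
  then show ?thesis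
    unfolding Y_op_def scal_def T_chain_def Tinv_chain_def
    by (simp add: opprod_append opprod_Cons opprod_Nil)
qed

lemma Y_op_mult_xinv:
  assumes "2 \<le> n" and "i < n"
  defines "X \<equiv> xpow n (-1)" and "c \<equiv> cst (tp powi (int i - int n))"
  shows "Y_op n i (X * f) = X * Y_op n i f + cst (1 - inverse tp) * c
           * T_chain i (n - 1) (T_op (n - 1) (X * T_op (n - 1) (omega n (Tinv_chain i f))))"
proof -
  let ?h = "omega n (Tinv_chain i f)"
  have n: "Suc (n - 1) = n" using assms by simp
  have "omega n (Tinv_chain i (X * f)) = xpow (n - 1) (-1) * ?h"
    unfolding X_def Tinv_chain_mult_xpow[OF assms(2)] omega_mult_xpow[OF assms(1)] ..
  then have "T_op (n - 1) (omega n (Tinv_chain i (X * f)))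
      = X * T_op (n - 1) ?h + cst (1 - inverse tp) * T_op (n - 1) (X * T_op (n - 1) ?h)"
    using T_op_mult_xinv[of "n - 1" ?h] unfolding n X_def by simp
  then have "Y_op n i (X * f) = c * (T_chain i (n - 1) (X * T_op (n - 1) ?h)
      + cst (1 - inverse tp) * T_chain i (n - 1) (T_op (n - 1) (X * T_op (n - 1) ?h)))"
    unfolding Y_op_split[OF assms(2)] c_def
    by (simp add: op_linear_add[OF op_linear_T_chain] op_linear_cst[OF op_linear_T_chain])
  also have "T_chain i (n - 1) (X * T_op (n - 1) ?h) = X * T_chain i (n - 1) (T_op (n - 1) ?h)"
    unfolding X_def using assms by (intro T_chain_mult_xpow) simp
  finally show ?thesis
    unfolding Y_op_split[OF assms(2)] c_def by (simp add: algebra_simps)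
qed

text \<open>The correction term of \<open>Y\<^sub>i x\<^sub>n\<^sup>-\<^sup>1\<close> ends in \<open>T\<^sub>n\<^sub>-\<^sub>1\<close>, so the Hecke identity collapses it.\<close>

lemma hecke_sum_Y_op_mult_xinv:
  assumes "2 \<le> n" and "i < n"
  defines "X \<equiv> xpow n (-1)"
  shows "hecke_sum n i (Y_op n i (X * f)) = hecke_sum n i (X * Y_op n i f)
           - cst ((inverse tp - 1) * tp ^ (n - i)) * Tinv_ij i n (X * Y_op n i f)"
proof -
  let ?c = "cst (tp powi (int i - int n))" and ?K = "T_op (n - 1) (omega n (Tinv_chain i f))"
  have "T_chain i (n - 1) (X * g) = X * T_chain i (n - 1) g" for g
    unfolding X_def using assms by (intro T_chain_mult_xpow) simp
  then have XY: "?c * T_chain i (n - 1) (X * ?K) = X * Y_op n i f"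
    unfolding Y_op_split[OF assms(2)] by (simp add: mult.left_commute)
  have "hecke_sum n i (Y_op n i (X * f)) = hecke_sum n i (X * Y_op n i f)
      + cst (1 - inverse tp) * ?c * hecke_sum n i (T_chain i (n - 1) (T_op (n - 1) (X * ?K)))"
    unfolding Y_op_mult_xinv[OF assms(1,2), folded X_def] mult.assoc
    by (simp add: op_linear_add[OF op_linear_hecke_sum] op_linear_cst[OF op_linear_hecke_sum])
  also have "\<dots> = hecke_sum n i (X * Y_op n i f)
      + cst (1 - inverse tp) * cst (tp ^ (n - i)) * Tinv_ij i n (?c * T_chain i (n - 1) (X * ?K))"
    unfolding hecke_sum_T_chain[OF assms(2)] op_linear_cst[OF op_linear_Tinv_ij]
    by (simp add: mult.left_commute)
  also have "cst (1 - inverse tp) = - cst (inverse tp - 1)"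
    by (metis cst_diff minus_diff_eq)
  finally show ?thesis unfolding XY by (simp add: cst_mult)
qed

text \<open>Only the summand \<open>j = n\<close> of the Hecke sum fails to commute with \<open>x\<^sub>n\<^sup>-\<^sup>1\<close>.\<close>

lemma hecke_sum_mult_xinv:
  assumes "i < n"
  defines "X \<equiv> xpow n (-1)"
  shows "hecke_sum n i (X * G) - X * hecke_sum n i G
       = cst ((inverse tp - 1) * tp ^ (n - i)) * (Tinv_ij i n (X * G) - X * Tinv_ij i n G)"
proof -
  have range: "{i + 1..n} = insert n {i + 1..<n}" using assms by auto
  have "Tinv_ij i j (X * G) = X * Tinv_ij i j G" if "j \<in> {i + 1..<n}" for j
    using that op_commutes_xpow_Tinv_ij[of j n "-1" i] unfolding op_commutes_def X_def by simp
  then have "(\<Sum>j = i + 1..<n. cst (tp ^ (j - i)) * Tinv_ij i j (X * G))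
      = X * (\<Sum>j = i + 1..<n. cst (tp ^ (j - i)) * Tinv_ij i j G)"
    by (simp add: sum_distrib_left mult.left_commute)
  then show ?thesis
    unfolding hecke_sum_def scal_def range cst_mult[symmetric] by (simp add: algebra_simps)
qed

lemma hecke_sum_Y_op_xinv_commutator:
  assumes "2 \<le> n" and "i < n"
  defines "X \<equiv> xpow n (-1)"
  shows "hecke_sum n i (Y_op n i (X * f)) - X * hecke_sum n i (Y_op n i f)
       = - cst ((inverse tp - 1) * tp ^ (n - i)) * (X * Tinv_ij i n (Y_op n i f))"
proof -
  let ?G = "Y_op n i f" and ?a = "(inverse tp - 1) * tp ^ (n - i)"
  have "hecke_sum n i (Y_op n i (X * f)) - X * hecke_sum n i ?G
      = (hecke_sum n i (X * ?G) - X * hecke_sum n i ?G) - cst ?a * Tinv_ij i n (X * ?G)"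
    unfolding X_def hecke_sum_Y_op_mult_xinv[OF assms(1,2)] by simp
  also have "\<dots> = - cst ?a * (X * Tinv_ij i n ?G)"
    unfolding X_def hecke_sum_mult_xinv[OF assms(2)] by (simp add: algebra_simps)
  finally show ?thesis .
qed

lemma D_op_eq_hecke_sum:
  "D_op n i f = xpow i (-1) * (f - cst (tp ^ (n - 1)) * hecke_sum n i (Y_op n i f))"
  by (simp add: D_op_def hecke_sum_def scal_def)

theorem lemma3p4:
  fixes n i :: nat and f :: lpoly
  assumes "n \<ge> 2" and "1 \<le> i" and "i < n" and "in_vars n f"
  shows "D_op n i (xpow n (-1) * f) - xpow n (-1) * D_op n i f
       = scal (tp ^ (2 * n - i - 1) * (inverse tp - 1))
           (xpow i (-1) * (xpow n (-1) * Tinv_ij i n (Y_op n i f)))"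
proof -
  let ?X = "xpow n (-1)" and ?G = "Y_op n i f" and ?a = "(inverse tp - 1) * tp ^ (n - i)"
  have "D_op n i (?X * f) - ?X * D_op n i f = - xpow i (-1) * cst (tp ^ (n - 1))
      * (hecke_sum n i (Y_op n i (?X * f)) - ?X * hecke_sum n i ?G)"
    unfolding D_op_eq_hecke_sum by (simp add: algebra_simps)
  also have "\<dots> = xpow i (-1) * cst (tp ^ (n - 1)) * cst ?a * (?X * Tinv_ij i n ?G)"
    unfolding hecke_sum_Y_op_xinv_commutator[OF assms(1,3)] by simp
  also have "\<dots> = scal (tp ^ (n - 1) * ?a) (xpow i (-1) * (?X * Tinv_ij i n ?G))"
    unfolding scal_def cst_mult[symmetric] by (simp add: mult_ac)
  also have "tp ^ (n - 1) * ?a = tp ^ (2 * n - i - 1) * (inverse tp - 1)"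
  proof -
    have "2 * n - i - 1 = (n - 1) + (n - i)" using assms by simp
    then show ?thesis by (simp add: power_add)
  qed
  finally show ?thesis .
qed

end
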